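(* Let $a,b,c,d\in\mathbb{C}\setminus\{0\}$ and let $s$ be the polynomial vector field on $\mathbb{A}^2$ associated to the Lotka–Volterra system \[ X'=X(aY+b),\qquad Y'=Y(cX+d). \] If $b\neq d$, the only irreducible invariant curves of $s$ defined over $\mathbb{C}$ are $X=0$ and $Y=0$. If $b=d$, the only irreducible invariant curves of $s$ defined over $\mathbb{C}$ are $X=0$, $Y=0$ and $cX-aY=0$.
   Context: For $P\in\mathbb{C}[X,Y]$, the Lie derivative along $s$ is $\mathcal{L}_s(P)=X(aY+b)\,\partial P/\partial X+Y(cX+d)\,\partial P/\partial Y$. A nonzero polynomial $P$ is invariant if $P$ divides $\mathcal{L}_s(P)$; an (irreducible) invariant curve over $\mathbb{C}$ is the zero set of an (irreducible) invariant polynomial $P\in\mathbb{C}[X,Y]$. *)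

theory Defs
  imports "HOL-Computational_Algebra.Polynomial_Factorial"
begin

text \<open>Bivariate polynomials C[X,Y] are represented as complex poly poly:
  polynomials in Y whose coefficients are polynomials in X.\<close>

type_synonym bipoly = "complex poly poly"

definition varX :: bipoly where "varX = [:[:0, 1:]:]"
definition varY :: bipoly where "varY = [:0, 1:]"
definition const2 :: "complex \<Rightarrow> bipoly" where "const2 z = [:[:z:]:]"

definition dX :: "bipoly \<Rightarrow> bipoly" where "dX P = map_poly pderiv P"
definition dY :: "bipoly \<Rightarrow> bipoly" where "dY P = pderiv P"

definition eval2 :: "bipoly \<Rightarrow> complex \<Rightarrow> complex \<Rightarrow> complex" where
  "eval2 P x y = poly (poly P [:y:]) x"

definition zero_set :: "bipoly \<Rightarrow> (complex \<times> complex) set" where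
  "zero_set P = {(x, y). eval2 P x y = 0}"

definition lie_LV :: "complex \<Rightarrow> complex \<Rightarrow> complex \<Rightarrow> complex \<Rightarrow> bipoly \<Rightarrow> bipoly" where
  "lie_LV a b c d P =
     varX * (const2 a * varY + const2 b) * dX P + varY * (const2 c * varX + const2 d) * dY P"

definition invariant_LV :: "complex \<Rightarrow> complex \<Rightarrow> complex \<Rightarrow> complex \<Rightarrow> bipoly \<Rightarrow> bool" where
  "invariant_LV a b c d P \<longleftrightarrow> P \<noteq> 0 \<and> P dvd lie_LV a b c d P"

definition irr_inv_curves :: "complex \<Rightarrow> complex \<Rightarrow> complex \<Rightarrow> complex \<Rightarrow> (complex \<times> complex) set set" where
  "irr_inv_curves a b c d = {zero_set P | P. irreducible P \<and> invariant_LV a b c d P}"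

end

theory Submission
  imports Defs
begin

text \<open>
  Write \<open>P = \<Sum>\<^sub>j p\<^sub>j(X) Y\<^sup>j\<close> and \<open>Lie P = K P\<close>. Unless \<open>Y\<close> or \<open>X\<close> divides \<open>P\<close>, comparing
  the top and the bottom \<open>Y\<close>-coefficients of this identity, and its restriction to \<open>X = 0\<close>
  (where the field becomes \<open>d Y \<partial>\<^sub>Y\<close>), forces the cofactor \<open>K\<close> to be a constant \<open>k\<close>.
  For a constant cofactor, \<open>p\<^sub>0\<close> is an eigenvector of \<open>b X \<partial>\<^sub>X\<close>, hence \<open>p\<^sub>0 = C X\<^sup>n\<close> with
  \<open>k = n b\<close>, and \<open>p\<^sub>j\<^sub>+\<^sub>1\<close> is determined by \<open>p\<^sub>j\<close> and has \<open>X\<close>-degree one less. So \<open>P\<close> is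
  determined by \<open>p\<^sub>0\<close>, and the nonzero constant \<open>p\<^sub>n\<close> gives \<open>k = n d\<close>. Thus either \<open>n = 0\<close>
  and \<open>P\<close> is a unit, or \<open>b = d\<close>; then \<open>L = cX - aY\<close> satisfies \<open>Lie L = b L\<close>, so \<open>P\<close> is a
  constant multiple of \<open>L\<^sup>n\<close>, and irreducibility forces \<open>n = 1\<close>.
\<close>

lemma const2_0 [simp]: "const2 0 = 0"
  by (simp add: const2_def)

lemma is_unit_const2: "is_unit (const2 z) \<longleftrightarrow> z \<noteq> 0"
  by (simp add: const2_def is_unit_const_poly_iff dvd_field_iff)

lemma pderiv_sum: "pderiv (sum f A) = (\<Sum>x\<in>A. pderiv (f x))"
  using higher_pderiv_sum[of 1] by simp

lemma dX_diff: "dX (P - Q) = dX P - dX Q"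
  unfolding dX_def by (rule poly_eqI) (simp add: coeff_map_poly pderiv_diff)

lemma dX_mult: "dX (P * Q) = dX P * Q + P * dX Q"
proof -
  have Leibniz: "pderiv (p * q) = pderiv p * q + p * pderiv q" for p q :: "complex poly"
    by (simp add: pderiv_mult algebra_simps)
  show ?thesis
    unfolding dX_def
    by (rule poly_eqI) (simp add: coeff_map_poly coeff_mult pderiv_sum Leibniz sum.distrib)
qed

lemma dY_diff: "dY (P - Q) = dY P - dY Q"
  unfolding dY_def by (simp add: pderiv_diff)

lemma dY_mult: "dY (P * Q) = dY P * Q + P * dY Q"
  unfolding dY_def by (simp add: pderiv_mult algebra_simps)

lemma dX_const2 [simp]: "dX (const2 z) = 0"
  unfolding dX_def const2_def by (simp add: map_poly_pCons)

lemma dY_const2 [simp]: "dY (const2 z) = 0"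
  unfolding dY_def const2_def by simp

lemma dX_varX [simp]: "dX varX = 1"
  unfolding dX_def varX_def by (simp add: map_poly_pCons pderiv_pCons one_pCons)

lemma dY_varX [simp]: "dY varX = 0"
  unfolding dY_def varX_def by simp

lemma dX_varY [simp]: "dX varY = 0"
  unfolding dX_def varY_def by (simp add: map_poly_pCons)

lemma dY_varY [simp]: "dY varY = 1"
  unfolding dY_def varY_def by (simp add: pderiv_pCons one_pCons)

lemma lie_LV_diff: "lie_LV a b c d (P - Q) = lie_LV a b c d P - lie_LV a b c d Q"
  unfolding lie_LV_def by (simp add: dX_diff dY_diff algebra_simps)

lemma lie_LV_mult: "lie_LV a b c d (P * Q) = lie_LV a b c d P * Q + P * lie_LV a b c d Q"
  unfolding lie_LV_def by (simp add: dX_mult dY_mult algebra_simps)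

lemma lie_LV_const2 [simp]: "lie_LV a b c d (const2 z) = 0"
  unfolding lie_LV_def by simp

lemma lie_LV_1 [simp]: "lie_LV a b c d 1 = 0"
  by (simp add: lie_LV_def dX_def dY_def one_pCons map_poly_pCons)

lemma lie_LV_power:
  assumes "lie_LV a b c d P = const2 k * P"
  shows "lie_LV a b c d (P ^ n) = const2 (of_nat n * k) * P ^ n"
proof (induction n)
  case 0
  show ?case by simp
next
  case (Suc n)
  have "const2 (of_nat (Suc n) * k) = const2 k + const2 (of_nat n * k)"
    by (simp add: const2_def algebra_simps)
  then show ?case
    using Suc by (simp add: lie_LV_mult assms algebra_simps)
qed

lemma coeff_lie_LV_0: "coeff (lie_LV a b c d P) 0 = [:0, b:] * pderiv (coeff P 0)"
  unfolding lie_LV_def varX_def varY_def const2_def dX_def dY_def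
  by (simp add: coeff_map_poly)

lemma coeff_lie_LV_Suc:
  "coeff (lie_LV a b c d P) (Suc j) =
     [:0, a:] * pderiv (coeff P j) + [:0, b:] * pderiv (coeff P (Suc j))
     + of_nat (Suc j) * [:d, c:] * coeff P (Suc j)"
  unfolding lie_LV_def varX_def varY_def const2_def dX_def dY_def
  by (rule poly_eqI)
     (simp add: coeff_map_poly coeff_pderiv algebra_simps coeff_pCons split: nat.split)

section \<open>The Euler operator \<open>b X \<partial>\<^sub>X\<close>\<close>

lemma coeff_X_pderiv: "coeff ([:0, b:] * pderiv p) i = b * of_nat i * coeff p i"
  by (cases i) (simp_all add: coeff_pderiv algebra_simps)

lemma degree_X_pderiv_le:
  fixes p :: "'a::{idom,ring_char_0} poly"
  shows "degree ([:0, b:] * pderiv p) \<le> degree p"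
  by (intro degree_le allI impI, subst coeff_X_pderiv) (simp add: coeff_eq_0)

lemma degree_X_pderiv:
  fixes p :: "'a::{idom,ring_char_0} poly"
  assumes "a \<noteq> 0"
  shows "degree ([:0, a:] * pderiv p) = degree p"
proof (cases "degree p = 0")
  case False
  then have "coeff ([:0, a:] * pderiv p) (degree p) \<noteq> 0"
    using assms by (subst coeff_X_pderiv) auto
  then show ?thesis
    using degree_X_pderiv_le le_degree le_antisym by blast
qed (simp add: pderiv_eq_0_iff)

lemma degree_eq_0_if_mult_eq_X_pderiv:
  fixes p :: "'a::{idom,ring_char_0} poly"
  assumes "q * p = [:0, b:] * pderiv p" and "p \<noteq> 0"
  shows "degree q = 0"
proof (cases "q = 0")
  case False
  then have "degree q + degree p \<le> degree p"
    using assms degree_X_pderiv_le[of b p] by (metis degree_mult_eq)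
  then show ?thesis by simp
qed simp

lemma euler_eigenvalue:
  fixes p :: "'a::{idom,ring_char_0} poly"
  assumes "[:0, b:] * pderiv p = smult k p" and "coeff p i \<noteq> 0"
  shows "k = of_nat i * b"
proof -
  have "b * of_nat i * coeff p i = k * coeff p i"
    using arg_cong[OF assms(1), of "\<lambda>q. coeff q i"] by (simp only: coeff_X_pderiv coeff_smult)
  then show ?thesis
    using assms(2) by (simp add: algebra_simps)
qed

lemma euler_eigenvector_monom:
  fixes p :: "'a::{idom,ring_char_0} poly"
  assumes "b \<noteq> 0" and "[:0, b:] * pderiv p = smult k p"
  shows "p = monom (lead_coeff p) (degree p)"
proof (rule poly_eqI)
  fix i
  have "coeff p i = 0" if "i \<noteq> degree p"
  proof (rule ccontr)
    assume "coeff p i \<noteq> 0"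
    then have "p \<noteq> 0" by auto
    then have "of_nat i * b = of_nat (degree p) * b"
      using euler_eigenvalue[OF assms(2)] \<open>coeff p i \<noteq> 0\<close> by (metis leading_coeff_0_iff)
    with assms(1) that show False by simp
  qed
  then show "coeff p i = coeff (monom (lead_coeff p) (degree p)) i"
    by (auto simp: coeff_monom)
qed

lemma degree_X_pderiv_add_linear:
  fixes p :: "'a::{idom,ring_char_0} poly"
  assumes "c \<noteq> 0" and "p \<noteq> 0"
  shows "degree ([:0, b:] * pderiv p + [:e, c:] * p) = Suc (degree p)"
proof -
  have "degree ([:e, c:] * p) = Suc (degree p)"
    using assms by (subst degree_mult_eq) auto
  moreover have "degree ([:0, b:] * pderiv p) < Suc (degree p)"
    using degree_X_pderiv_le[of b p] by simp
  ultimately show ?thesis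
    by (metis degree_add_eq_right)
qed

section \<open>Restriction to \<open>X = 0\<close>\<close>

definition restrict_X0 :: "bipoly \<Rightarrow> complex poly" where
  "restrict_X0 P = map_poly (\<lambda>p. poly p 0) P"

lemma coeff_restrict_X0: "coeff (restrict_X0 P) i = poly (coeff P i) 0"
  by (simp add: restrict_X0_def coeff_map_poly)

lemma restrict_X0_mult: "restrict_X0 (P * Q) = restrict_X0 P * restrict_X0 Q"
  by (rule poly_eqI) (simp add: coeff_restrict_X0 coeff_mult poly_sum)

lemma restrict_X0_const2_mult: "restrict_X0 (const2 k * P) = smult k (restrict_X0 P)"
  by (rule poly_eqI) (simp add: coeff_restrict_X0 const2_def)

lemma restrict_X0_lie_LV:
  "restrict_X0 (lie_LV a b c d P) = [:0, d:] * pderiv (restrict_X0 P)"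
proof (rule poly_eqI)
  fix i
  show "coeff (restrict_X0 (lie_LV a b c d P)) i = coeff ([:0, d:] * pderiv (restrict_X0 P)) i"
    by (cases i) (simp_all only: coeff_X_pderiv coeff_restrict_X0 coeff_lie_LV_0 coeff_lie_LV_Suc,
        simp_all add: poly_0_coeff_0 coeff_X_pderiv of_nat_poly)
qed

lemma varY_dvd_if_coeff_0_eq_0:
  assumes "coeff P 0 = 0"
  shows "varY dvd P"
proof (cases P)
  case (pCons a Q)
  with assms have "P = varY * Q"
    by (simp add: varY_def)
  then show ?thesis ..
qed

lemma varX_dvd_if_restrict_X0_eq_0:
  assumes "restrict_X0 P = 0"
  shows "varX dvd P"
proof
  show "P = varX * map_poly (\<lambda>p. p div [:0, 1:]) P"
  proof (rule poly_eqI)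
    fix j
    have "[:0, 1:] dvd coeff P j"
      using arg_cong[OF assms, of "\<lambda>q. coeff q j"]
      by (simp add: coeff_restrict_X0 poly_eq_0_iff_dvd)
    then have "coeff P j = [:0, 1:] * (coeff P j div [:0, 1:])"
      by (rule dvd_mult_div_cancel[symmetric])
    then show "coeff P j = coeff (varX * map_poly (\<lambda>p. p div [:0, 1:]) P) j"
      by (simp add: varX_def coeff_map_poly)
  qed
qed

section \<open>Polynomials with constant cofactor\<close>

lemma coeff_0_eigen:
  assumes "lie_LV a b c d P = const2 k * P"
  shows "[:0, b:] * pderiv (coeff P 0) = smult k (coeff P 0)"
  using arg_cong[OF assms, of "\<lambda>Q. coeff Q 0"] by (simp only: coeff_lie_LV_0) (simp add: const2_def)

lemma coeff_Suc_eigen: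
  assumes "lie_LV a b c d P = const2 k * P"
  shows "[:0, b:] * pderiv (coeff P (Suc j))
           + [:of_nat (Suc j) * d - k, of_nat (Suc j) * c:] * coeff P (Suc j)
         = - ([:0, a:] * pderiv (coeff P j))"
proof -
  have coeff_eq: "[:0, a:] * pderiv (coeff P j) + [:0, b:] * pderiv (coeff P (Suc j))
          + of_nat (Suc j) * [:d, c:] * coeff P (Suc j) = smult k (coeff P (Suc j))"
    using arg_cong[OF assms, of "\<lambda>Q. coeff Q (Suc j)"]
    by (simp only: coeff_lie_LV_Suc) (simp add: const2_def)
  have linear_factor: "[:of_nat (Suc j) * d - k, of_nat (Suc j) * c:] * q
      = of_nat (Suc j) * [:d, c:] * q - smult k q" for q :: "complex poly"
    by (simp add: of_nat_poly algebra_simps smult_add_left smult_diff_left)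
  have rearrange: "y + (z - w) = - x" if "x + y + z = w" for x y z w :: "complex poly"
    using that by (simp add: algebra_simps)
  show ?thesis
    unfolding linear_factor by (rule rearrange[OF coeff_eq])
qed

lemma eigen_eq_0_if_coeff_0_eq_0:
  assumes "c \<noteq> 0" and "lie_LV a b c d P = const2 k * P" and "coeff P 0 = 0"
  shows "P = 0"
proof -
  have "coeff P j = 0" for j
  proof (induction j)
    case (Suc j)
    show ?case
    proof (rule ccontr)
      assume "coeff P (Suc j) \<noteq> 0"
      then have "degree ([:0, b:] * pderiv (coeff P (Suc j))
          + [:of_nat (Suc j) * d - k, of_nat (Suc j) * c:] * coeff P (Suc j)) \<noteq> 0"
        using assms(1) by (subst degree_X_pderiv_add_linear) (auto simp del: of_nat_Suc)
      then show False
        using coeff_Suc_eigen[OF assms(2), of j] Suc.IH by simp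
    qed
  qed (use assms(3) in simp)
  then show ?thesis
    by (simp add: poly_eqI)
qed

lemma eigen_eq_if_coeff_0_eq:
  assumes "c \<noteq> 0"
    and "lie_LV a b c d P = const2 k * P" and "lie_LV a b c d Q = const2 k * Q"
    and "coeff P 0 = coeff Q 0"
  shows "P = Q"
proof -
  have "lie_LV a b c d (P - Q) = const2 k * (P - Q)"
    using assms(2,3) by (simp add: lie_LV_diff algebra_simps)
  then have "P - Q = 0"
    by (rule eigen_eq_0_if_coeff_0_eq_0[OF assms(1)]) (simp add: assms(4))
  then show ?thesis by simp
qed

lemma degree_coeff_Suc_eigen:
  assumes "a \<noteq> 0" and "c \<noteq> 0" and "lie_LV a b c d P = const2 k * P"
    and "degree (coeff P j) = Suc r"
  shows "coeff P (Suc j) \<noteq> 0" and "degree (coeff P (Suc j)) = r"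
proof -
  have rhs: "degree (- ([:0, a:] * pderiv (coeff P j))) = Suc r"
    using assms(4) by (simp only: degree_minus degree_X_pderiv[OF assms(1)])
  show nz: "coeff P (Suc j) \<noteq> 0"
    using rhs coeff_Suc_eigen[OF assms(3), of j] by auto
  have "Suc (degree (coeff P (Suc j)))
      = degree ([:0, b:] * pderiv (coeff P (Suc j))
          + [:of_nat (Suc j) * d - k, of_nat (Suc j) * c:] * coeff P (Suc j))"
    using assms(2) nz by (subst degree_X_pderiv_add_linear) (auto simp del: of_nat_Suc)
  also have "\<dots> = Suc r"
    using rhs by (simp only: coeff_Suc_eigen[OF assms(3)])
  finally show "degree (coeff P (Suc j)) = r"
    by simp
qed

lemma degree_coeff_eigen:
  assumes "a \<noteq> 0" and "c \<noteq> 0" and "lie_LV a b c d P = const2 k * P"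
    and "coeff P 0 \<noteq> 0" and "j \<le> degree (coeff P 0)"
  shows "coeff P j \<noteq> 0 \<and> degree (coeff P j) = degree (coeff P 0) - j"
  using assms(5)
proof (induction j)
  case (Suc j)
  then have "degree (coeff P j) = Suc (degree (coeff P 0) - Suc j)"
    by simp
  then show ?case
    using degree_coeff_Suc_eigen[OF assms(1-3)] by blast
qed (use assms(4) in simp)

lemma eigenvalue_eq_degree_times_b:
  assumes "lie_LV a b c d P = const2 k * P" and "coeff P 0 \<noteq> 0"
  shows "k = of_nat (degree (coeff P 0)) * b"
  using euler_eigenvalue[OF coeff_0_eigen[OF assms(1)]] assms(2) by simp

lemma eigenvalue_eq_degree_times_d:
  assumes "a \<noteq> 0" and "c \<noteq> 0" and "lie_LV a b c d P = const2 k * P"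
    and "coeff P 0 \<noteq> 0"
  shows "k = of_nat (degree (coeff P 0)) * d"
proof -
  define n where "n = degree (coeff P 0)"
  have "coeff P n \<noteq> 0" and "degree (coeff P n) = 0"
    using degree_coeff_eigen[OF assms, of n] by (simp_all add: n_def)
  then have "coeff (restrict_X0 P) n \<noteq> 0"
    by (auto simp: coeff_restrict_X0 elim: degree_eq_zeroE)
  moreover have "[:0, d:] * pderiv (restrict_X0 P) = smult k (restrict_X0 P)"
    using arg_cong[OF assms(3), of restrict_X0]
    by (simp only: restrict_X0_lie_LV restrict_X0_const2_mult)
  ultimately show ?thesis
    unfolding n_def by (metis euler_eigenvalue)
qed

section \<open>The cofactor\<close>

lemma degree_lie_LV_le: "degree (lie_LV a b c d P) \<le> Suc (degree P)"
proof (rule degree_le, intro allI impI)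
  fix i
  assume "Suc (degree P) < i"
  then obtain j where "i = Suc j" and "degree P < j"
    by (cases i) auto
  then show "coeff (lie_LV a b c d P) i = 0"
    by (simp add: coeff_lie_LV_Suc coeff_eq_0)
qed

lemma cofactor_eq_const2:
  assumes cofactor: "lie_LV a b c d P = K * P"
    and "coeff P 0 \<noteq> 0" and "restrict_X0 P \<noteq> 0"
  shows "\<exists>k. K = const2 k"
proof -
  define m where "m = degree P"
  define u where "u = coeff K 0"
  define v where "v = coeff K 1"
  have "P \<noteq> 0"
    using assms(2) by auto
  have "degree K \<le> 1"
  proof (cases "K = 0")
    case False
    then have "degree K + degree P \<le> Suc (degree P)"
      using degree_lie_LV_le[of a b c d P] \<open>P \<noteq> 0\<close> by (simp add: cofactor degree_mult_eq)
    then show ?thesis by simp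
  qed simp
  then have K_eq: "K = [:u, v:]"
    unfolding u_def v_def
    by (intro poly_eqI) (auto simp: coeff_pCons coeff_eq_0 split: nat.split)
  have "v * coeff P m = [:0, a:] * pderiv (coeff P m)"
    using arg_cong[OF cofactor, of "\<lambda>Q. coeff Q (Suc m)"]
    by (simp only: coeff_lie_LV_Suc) (simp add: K_eq m_def coeff_eq_0)
  then have "degree v = 0"
    by (rule degree_eq_0_if_mult_eq_X_pderiv) (use \<open>P \<noteq> 0\<close> in \<open>simp add: m_def\<close>)
  have "restrict_X0 K * restrict_X0 P = [:0, d:] * pderiv (restrict_X0 P)"
    using arg_cong[OF cofactor, of restrict_X0]
    by (simp only: restrict_X0_lie_LV restrict_X0_mult)
  then have "degree (restrict_X0 K) = 0"
    using assms(3) by (rule degree_eq_0_if_mult_eq_X_pderiv)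
  then have "poly v 0 = 0"
    using coeff_eq_0[of "restrict_X0 K" 1] by (simp add: coeff_restrict_X0 K_eq)
  with \<open>degree v = 0\<close> have "v = 0"
    by (auto elim: degree_eq_zeroE)
  have "u * coeff P 0 = [:0, b:] * pderiv (coeff P 0)"
    using arg_cong[OF cofactor, of "\<lambda>Q. coeff Q 0"]
    by (simp only: coeff_lie_LV_0) (simp add: K_eq)
  then have "degree u = 0"
    using assms(2) by (rule degree_eq_0_if_mult_eq_X_pderiv)
  then have "K = const2 (coeff u 0)"
    using K_eq \<open>v = 0\<close> by (auto simp: const2_def elim: degree_eq_zeroE)
  then show ?thesis ..
qed

definition line_LV :: "complex \<Rightarrow> complex \<Rightarrow> bipoly" where
  "line_LV a c = const2 c * varX - const2 a * varY"

lemma line_LV_eq: "line_LV a c = [:[:0, c:], [:- a:]:]"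
  unfolding line_LV_def const2_def varX_def varY_def by simp

lemma lie_LV_varX: "lie_LV a b c d varX = varX * (const2 a * varY + const2 b)"
  unfolding lie_LV_def by simp

lemma lie_LV_varY: "lie_LV a b c d varY = varY * (const2 c * varX + const2 d)"
  unfolding lie_LV_def by simp

lemma lie_LV_line_LV: "lie_LV a b c b (line_LV a c) = const2 b * line_LV a c"
  unfolding line_LV_def by (simp add: lie_LV_diff lie_LV_mult lie_LV_varX lie_LV_varY algebra_simps)

lemma eval2_mult: "eval2 (P * Q) x y = eval2 P x y * eval2 Q x y"
  unfolding eval2_def by simp

lemma eval2_diff: "eval2 (P - Q) x y = eval2 P x y - eval2 Q x y"
  unfolding eval2_def by simp

lemma eval2_one [simp]: "eval2 1 x y = 1"
  unfolding eval2_def by simp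

lemma eval2_const2 [simp]: "eval2 (const2 z) x y = z"
  unfolding eval2_def const2_def by simp

lemma eval2_varX [simp]: "eval2 varX x y = x"
  unfolding eval2_def varX_def by simp

lemma eval2_varY [simp]: "eval2 varY x y = y"
  unfolding eval2_def varY_def by simp

lemma zero_set_mult_unit:
  assumes "is_unit U"
  shows "zero_set (U * P) = zero_set P"
proof -
  obtain V where "1 = U * V"
    using assms by (rule dvdE)
  then have "1 = eval2 U x y * eval2 V x y" for x y
    by (metis eval2_mult eval2_one)
  then have "eval2 U x y \<noteq> 0" for x y
    by (metis mult_zero_left zero_neq_one)
  then show ?thesis
    unfolding zero_set_def by (simp add: eval2_mult)
qed

lemma zero_set_eq_if_irreducible_dvd:
  assumes "irreducible P" and "F dvd P" and "\<not> is_unit F"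
  shows "zero_set P = zero_set F"
proof -
  obtain R where "P = F * R"
    using assms(2) by (rule dvdE)
  then have "is_unit R"
    using irreducibleD[OF assms(1)] assms(3) by blast
  then show ?thesis
    using zero_set_mult_unit \<open>P = F * R\<close> by (metis mult.commute)
qed

lemma zero_set_varX: "zero_set varX = {(x, y). x = 0}"
  unfolding zero_set_def by simp

lemma zero_set_varY: "zero_set varY = {(x, y). y = 0}"
  unfolding zero_set_def by simp

lemma zero_set_line_LV: "zero_set (line_LV a c) = {(x, y). c * x - a * y = 0}"
  unfolding zero_set_def line_LV_def by (simp add: eval2_mult eval2_diff)

lemma irreducible_degree_1:
  fixes p :: "'a::{idom_divide, algebraic_semidom} poly"
  assumes "degree p = 1" and "is_unit (lead_coeff p)"
  shows "irreducible p"
proof (rule irreducibleI)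
  show "p \<noteq> 0" and "\<not> is_unit p"
    using assms(1) by (auto simp: is_unit_poly_iff)
  fix q r
  assume "p = q * r"
  with \<open>p \<noteq> 0\<close> have "degree q = 0 \<or> degree r = 0"
    using assms(1) by (auto simp: degree_mult_eq)
  moreover have "lead_coeff q * lead_coeff r = lead_coeff p"
    by (simp only: \<open>p = q * r\<close> lead_coeff_mult)
  then have "is_unit (lead_coeff q)" and "is_unit (lead_coeff r)"
    using assms(2) by (metis is_unit_mult_iff)+
  ultimately show "is_unit q \<or> is_unit r"
    by (auto simp: is_unit_poly_iff elim!: degree_eq_zeroE)
qed

lemma irreducible_varX: "irreducible varX"
  unfolding varX_def irreducible_const_poly_iff by (rule irreducible_linear_field_poly) simp

lemma irreducible_varY: "irreducible varY"
  by (rule irreducible_degree_1) (simp_all add: varY_def)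

lemma irreducible_line_LV: "a \<noteq> 0 \<Longrightarrow> irreducible (line_LV a c)"
  by (rule irreducible_degree_1) (simp_all add: line_LV_eq is_unit_const_poly_iff dvd_field_iff)

lemma invariant_LV_varX: "invariant_LV a b c d varX"
  unfolding invariant_LV_def lie_LV_varX by (intro conjI dvd_triv_left) (simp add: varX_def)

lemma invariant_LV_varY: "invariant_LV a b c d varY"
  unfolding invariant_LV_def lie_LV_varY by (intro conjI dvd_triv_left) (simp add: varY_def)

lemma invariant_LV_line_LV: "a \<noteq> 0 \<Longrightarrow> invariant_LV a b c b (line_LV a c)"
  unfolding invariant_LV_def lie_LV_line_LV by (intro conjI dvd_triv_right) (simp add: line_LV_eq)

lemma eigen_eq_const2_mult_line_LV_power:
  assumes "a \<noteq> 0" "b \<noteq> 0" "c \<noteq> 0"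
    and eigen: "lie_LV a b c d P = const2 k * P" and "coeff P 0 \<noteq> 0"
  obtains \<gamma> n where "\<gamma> \<noteq> 0" and "P = const2 \<gamma> * line_LV a c ^ n" and "n = 0 \<or> b = d"
proof -
  define n where "n = degree (coeff P 0)"
  define C where "C = lead_coeff (coeff P 0)"
  define \<gamma> where "\<gamma> = C / c ^ n"
  have coeff_P_0: "coeff P 0 = monom C n"
    unfolding n_def C_def using euler_eigenvector_monom[OF assms(2) coeff_0_eigen[OF eigen]] .
  have k_b: "k = of_nat n * b" and k_d: "k = of_nat n * d"
    unfolding n_def
    using eigenvalue_eq_degree_times_b[OF eigen assms(5)]
      eigenvalue_eq_degree_times_d[OF assms(1,3) eigen assms(5)] .
  then have "n = 0 \<or> b = d"
    by auto
  then have "lie_LV a b c d (line_LV a c ^ n) = const2 k * line_LV a c ^ n"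
    using lie_LV_power[OF lie_LV_line_LV, of a b c n] k_b by auto
  then have "lie_LV a b c d (const2 \<gamma> * line_LV a c ^ n) = const2 k * (const2 \<gamma> * line_LV a c ^ n)"
    by (simp add: lie_LV_mult algebra_simps)
  moreover have "coeff (const2 \<gamma> * line_LV a c ^ n) 0 = monom C n"
  proof -
    have "coeff (line_LV a c) 0 = monom c 1"
      by (simp add: line_LV_eq monom_Suc monom_0)
    then show ?thesis
      using assms(3) by (simp add: const2_def coeff_0_power monom_power smult_monom \<gamma>_def)
  qed
  ultimately have "P = const2 \<gamma> * line_LV a c ^ n"
    using coeff_P_0 by (intro eigen_eq_if_coeff_0_eq[OF assms(3) eigen]) simp_all
  moreover have "\<gamma> \<noteq> 0"
    using assms(3,5) by (simp add: \<gamma>_def C_def)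
  ultimately show ?thesis
    using that \<open>n = 0 \<or> b = d\<close> by blast
qed

lemma irreducible_eigen_eq_line_LV:
  assumes "a \<noteq> 0" "b \<noteq> 0" "c \<noteq> 0"
    and "irreducible P" and "lie_LV a b c d P = const2 k * P" and "coeff P 0 \<noteq> 0"
  shows "b = d" and "zero_set P = zero_set (line_LV a c)"
proof -
  obtain \<gamma> n where "\<gamma> \<noteq> 0" and P_eq: "P = const2 \<gamma> * line_LV a c ^ n" and "n = 0 \<or> b = d"
    using eigen_eq_const2_mult_line_LV_power[OF assms(1-3,5,6)] .
  then have "irreducible (line_LV a c ^ n)"
    using assms(4) by (simp add: irreducible_mult_unit_left is_unit_const2)
  then have "n = 1"
    by simp
  then show "b = d"
    using \<open>n = 0 \<or> b = d\<close> by simp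
  show "zero_set P = zero_set (line_LV a c)"
    using P_eq \<open>n = 1\<close> \<open>\<gamma> \<noteq> 0\<close> by (simp add: zero_set_mult_unit is_unit_const2)
qed

lemma zero_set_irreducible_invariant_LV:
  assumes "a \<noteq> 0" "b \<noteq> 0" "c \<noteq> 0"
    and "irreducible P" and "invariant_LV a b c d P"
  shows "zero_set P = {(x, y). x = 0} \<or> zero_set P = {(x, y). y = 0}
       \<or> (b = d \<and> zero_set P = {(x, y). c * x - a * y = 0})"
proof -
  obtain K where cofactor: "lie_LV a b c d P = K * P"
    using assms(5) by (auto simp: invariant_LV_def mult.commute elim: dvdE)
  consider "coeff P 0 = 0" | "restrict_X0 P = 0" | "coeff P 0 \<noteq> 0" "restrict_X0 P \<noteq> 0"
    by blast
  then show ?thesis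
  proof cases
    case 1
    have "zero_set P = zero_set varY"
      using assms(4) varY_dvd_if_coeff_0_eq_0[OF 1] irreducible_not_unit[OF irreducible_varY]
      by (rule zero_set_eq_if_irreducible_dvd)
    then show ?thesis by (simp add: zero_set_varY)
  next
    case 2
    have "zero_set P = zero_set varX"
      using assms(4) varX_dvd_if_restrict_X0_eq_0[OF 2] irreducible_not_unit[OF irreducible_varX]
      by (rule zero_set_eq_if_irreducible_dvd)
    then show ?thesis by (simp add: zero_set_varX)
  next
    case 3
    then obtain k where "K = const2 k"
      using cofactor_eq_const2[OF cofactor] by blast
    then have "lie_LV a b c d P = const2 k * P"
      using cofactor by simp
    from irreducible_eigen_eq_line_LV[OF assms(1-4) this 3(1)] show ?thesis
      by (simp add: zero_set_line_LV)
  qed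
qed

theorem mainTheorem6:
  fixes a b c d :: complex
  assumes "a \<noteq> 0" and "b \<noteq> 0" and "c \<noteq> 0" and "d \<noteq> 0"
  shows "(b \<noteq> d \<longrightarrow> irr_inv_curves a b c d = {{(x, y). x = 0}, {(x, y). y = 0}})
       \<and> (b = d \<longrightarrow> irr_inv_curves a b c d =
            {{(x, y). x = 0}, {(x, y). y = 0}, {(x, y). c * x - a * y = 0}})"
proof -
  have "{(x, y). x = 0} \<in> irr_inv_curves a b c d"
    unfolding irr_inv_curves_def using irreducible_varX invariant_LV_varX zero_set_varX by blast
  moreover have "{(x, y). y = 0} \<in> irr_inv_curves a b c d"
    unfolding irr_inv_curves_def using irreducible_varY invariant_LV_varY zero_set_varY by blast
  moreover have "{(x, y). c * x - a * y = 0} \<in> irr_inv_curves a b c d" if "b = d"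
    unfolding irr_inv_curves_def that
    using irreducible_line_LV invariant_LV_line_LV zero_set_line_LV assms(1) by blast
  moreover have "Z = {(x, y). x = 0} \<or> Z = {(x, y). y = 0}
       \<or> (b = d \<and> Z = {(x, y). c * x - a * y = 0})" if "Z \<in> irr_inv_curves a b c d" for Z
    using that zero_set_irreducible_invariant_LV[OF assms(1-3)]
    unfolding irr_inv_curves_def by blast
  ultimately show ?thesis
    by blast
qed

end
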